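(* (a) There exist $n$ and a linear subspace $X\subset \mathrm{Mat}_{n\times n}(\mathbb{R})$ such that $\mathrm{MinRank}(X\otimes X)<(\mathrm{MinRank}(X))^2$. (b) For every integer $N\ge 0$ there exist $n$ and a linear subspace $X\subset\mathrm{Mat}_{n\times n}(\mathbb{R})$ such that $(\mathrm{MinRank}(X))^2-\mathrm{MinRank}(X\otimes X)\ge N$.
   Context: For a nonzero linear subspace $X\subset\mathrm{Mat}_{n\times n}(\mathbb{R})$, $\mathrm{MinRank}(X)$ is the minimal rank of a nonzero matrix in $X$. $X\otimes X\subset \mathrm{Mat}_{n^2\times n^2}(\mathbb{R})$ denotes the linear span of all Kronecker products $x\otimes y$ with $x,y\in X$. *)

theory Defs
  imports "Jordan_Normal_Form.DL_Rank"
begin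

definition mat_rank :: "real mat \<Rightarrow> nat" where
  "mat_rank A = vec_space.rank (dim_row A) A"

definition is_mat_subspace :: "nat \<Rightarrow> real mat set \<Rightarrow> bool" where
  "is_mat_subspace n X \<longleftrightarrow> X \<subseteq> carrier_mat n n \<and> 0\<^sub>m n n \<in> X \<and>
     (\<forall>x\<in>X. \<forall>y\<in>X. x + y \<in> X) \<and> (\<forall>c. \<forall>x\<in>X. c \<cdot>\<^sub>m x \<in> X)"

definition mat_span :: "nat \<Rightarrow> real mat set \<Rightarrow> real mat set" where
  "mat_span n S = \<Inter> {Y. is_mat_subspace n Y \<and> S \<subseteq> Y}"

definition kron :: "real mat \<Rightarrow> real mat \<Rightarrow> real mat" where
  "kron A B = mat (dim_row A * dim_row B) (dim_col A * dim_col B)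
     (\<lambda>(i, j). A $$ (i div dim_row B, j div dim_col B) * B $$ (i mod dim_row B, j mod dim_col B))"

definition tensor_space :: "nat \<Rightarrow> real mat set \<Rightarrow> real mat set" where
  "tensor_space n X = mat_span (n * n) {kron x y | x y. x \<in> X \<and> y \<in> X}"

definition min_rank :: "nat \<Rightarrow> real mat set \<Rightarrow> nat" where
  "min_rank n X = Min {mat_rank x | x. x \<in> X \<and> x \<noteq> 0\<^sub>m n n}"

end

theory Submission imports Defs begin

text \<open>Let \<open>J\<close> be block-diagonal with \<open>n/2\<close> blocks \<open>[[0,-1],[1,0]]\<close>, i.e. multiplication by \<open>i\<close>
on \<open>\<complex>\<^bsup>n/2\<^esup> = \<real>\<^sup>n\<close>, and let \<open>X = span {1, J}\<close>, a copy of \<open>\<complex>\<close>. Since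
\<open>(a + bJ)(a - bJ) = (a\<^sup>2 + b\<^sup>2)\<close>, every nonzero element of \<open>X\<close> is invertible, so
\<open>MinRank X = n\<close>. But \<open>X \<otimes> X \<cong> \<complex> \<otimes>\<^sub>\<real> \<complex>\<close> has zero divisors: \<open>J \<otimes> J\<close> is the signed
permutation matrix of the fixed-point-free involution \<open>(a, a') \<mapsto> (a xor 1, a' xor 1)\<close> with
symmetric signs, so \<open>1 \<otimes> 1 - J \<otimes> J\<close> is a sum of one rank-one block per orbit and has rank
at most \<open>n\<^sup>2/2\<close>. Hence \<open>MinRank X\<^sup>2 - MinRank (X \<otimes> X) \<ge> n\<^sup>2/2\<close>, which is unbounded in \<open>n\<close>.\<close>

lemma rank_le_card_of_sum_products:
  fixes f g :: "'i \<Rightarrow> nat \<Rightarrow> 'a::field"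
  assumes "finite I" "A \<in> carrier_mat N M"
    and "\<And>r c. r < N \<Longrightarrow> c < M \<Longrightarrow> A $$ (r, c) = (\<Sum>i\<in>I. f i r * g i c)"
  shows "vec_space.rank N A \<le> card I"
  using assms
proof (induction I arbitrary: A rule: finite_induct)
  case empty
  then have "A = 0\<^sub>m N M" by (intro eq_matI) auto
  then show ?case using vec_space.rank_0I by simp
next
  case (insert x F)
  define B where "B = mat N M (\<lambda>(r, c). \<Sum>i\<in>F. f i r * g i c)"
  define C where "C = mat N M (\<lambda>(r, c). f x r * g x c)"
  have B: "B \<in> carrier_mat N M" and C: "C \<in> carrier_mat N M" unfolding B_def C_def by auto
  have "A = C + B" using insert by (intro eq_matI) (auto simp: B_def C_def)
  then have "vec_space.rank N A \<le> vec_space.rank N C + vec_space.rank N B"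
    using vec_space.rank_subadditive[OF C B] by simp
  moreover have "vec_space.rank N C \<le> 1"
    by (rule vec_space.rank_le_1_product_entries[OF C, of "f x" "g x"]) (auto simp: C_def)
  moreover have "vec_space.rank N B \<le> card F" using insert.IH[OF B] by (simp add: B_def)
  ultimately show ?case using insert.hyps by simp
qed

lemma rank_le_card_of_block_entries:
  fixes v :: "nat \<Rightarrow> 'a::field" and \<rho> :: "nat \<Rightarrow> 'b"
  assumes "A \<in> carrier_mat N M"
    and "\<And>r c. r < N \<Longrightarrow> c < M \<Longrightarrow> A $$ (r, c) = (if \<rho> r = \<rho> c then v r * v c else 0)"
  shows "vec_space.rank N A \<le> card (\<rho> ` {..<N})"
proof (rule rank_le_card_of_sum_products[OF _ assms(1)])
  fix r c assume rc: "r < N" "c < M"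
  have "(\<Sum>i\<in>\<rho> ` {..<N}. (if \<rho> r = i then v r else 0) * (if \<rho> c = i then v c else 0))
      = (\<Sum>i\<in>\<rho> ` {..<N}. if i = \<rho> r then v r * (if \<rho> c = \<rho> r then v c else 0) else 0)"
    by (rule sum.cong) auto
  also have "\<dots> = A $$ (r, c)" using rc assms(2) by (simp add: sum.delta')
  finally show "A $$ (r, c) = (\<Sum>i\<in>\<rho> ` {..<N}. (if \<rho> r = i then v r else 0) * (if \<rho> c = i then v c else 0))"
    by simp
qed simp

lemma mult_eq_smult_one_if_square_eq_minus_one:
  fixes J :: "'a::comm_ring_1 mat"
  assumes J: "J \<in> carrier_mat n n" and JJ: "J * J = - 1\<^sub>m n"
  shows "(a \<cdot>\<^sub>m 1\<^sub>m n + b \<cdot>\<^sub>m J) * (a \<cdot>\<^sub>m 1\<^sub>m n + (-b) \<cdot>\<^sub>m J) = (a\<^sup>2 + b\<^sup>2) \<cdot>\<^sub>m 1\<^sub>m n"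
proof -
  have I: "1\<^sub>m n \<in> carrier_mat n n" by simp
  define Y where "Y = a \<cdot>\<^sub>m 1\<^sub>m n + (-b) \<cdot>\<^sub>m J"
  have Y: "Y \<in> carrier_mat n n" using J unfolding Y_def by simp
  have "(a \<cdot>\<^sub>m 1\<^sub>m n + b \<cdot>\<^sub>m J) * Y = a \<cdot>\<^sub>m Y + b \<cdot>\<^sub>m (J * Y)"
    using J Y by (simp add: add_mult_distrib_mat[of _ n n _ Y] mult_smult_assoc_mat[OF I Y]
        mult_smult_assoc_mat[OF J Y] left_mult_one_mat[OF Y])
  also have "J * Y = a \<cdot>\<^sub>m J + (-b) \<cdot>\<^sub>m (J * J)"
    unfolding Y_def using J
    by (simp add: mult_add_distrib_mat[OF J smult_carrier_mat[OF I] smult_carrier_mat[OF J]]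
        mult_smult_distrib[OF J I] mult_smult_distrib[OF J J] right_mult_one_mat[OF J])
  also have "a \<cdot>\<^sub>m Y + b \<cdot>\<^sub>m (a \<cdot>\<^sub>m J + (-b) \<cdot>\<^sub>m (J * J)) = (a\<^sup>2 + b\<^sup>2) \<cdot>\<^sub>m 1\<^sub>m n"
    unfolding JJ Y_def using J by (intro eq_matI) (auto simp: algebra_simps power2_eq_square)
  finally show ?thesis unfolding Y_def .
qed

lemma kron_carrier_mat:
  "x \<in> carrier_mat n n \<Longrightarrow> y \<in> carrier_mat m m \<Longrightarrow> kron x y \<in> carrier_mat (n * m) (n * m)"
  unfolding kron_def by auto

lemma mat_span_subset_carrier_mat:
  assumes "S \<subseteq> carrier_mat n n"
  shows "mat_span n S \<subseteq> carrier_mat n n"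
proof -
  have "is_mat_subspace n (carrier_mat n n)" unfolding is_mat_subspace_def by auto
  then show ?thesis using assms unfolding mat_span_def by blast
qed

lemma mat_span_add_smult_mem:
  assumes "x \<in> S" "y \<in> S"
  shows "x + c \<cdot>\<^sub>m y \<in> mat_span n S"
  unfolding mat_span_def
proof (intro InterI, clarify)
  fix Y assume Y: "is_mat_subspace n Y" "S \<subseteq> Y"
  then have "c \<cdot>\<^sub>m y \<in> Y" using assms(2) unfolding is_mat_subspace_def by blast
  then show "x + c \<cdot>\<^sub>m y \<in> Y" using Y assms(1) unfolding is_mat_subspace_def by blast
qed

lemma tensor_space_subset_carrier_mat:
  "X \<subseteq> carrier_mat n n \<Longrightarrow> tensor_space n X \<subseteq> carrier_mat (n * n) (n * n)"
  unfolding tensor_space_def by (rule mat_span_subset_carrier_mat) (auto intro: kron_carrier_mat)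

lemma min_rank_le:
  assumes X: "X \<subseteq> carrier_mat n n" and x: "x \<in> X" "x \<noteq> 0\<^sub>m n n"
  shows "min_rank n X \<le> mat_rank x"
proof -
  let ?R = "{mat_rank x | x. x \<in> X \<and> x \<noteq> 0\<^sub>m n n}"
  have "mat_rank y \<le> n" if "y \<in> X" for y
    using vec_space.rank_le_nc[of y n n] X that unfolding mat_rank_def by auto
  then have "?R \<subseteq> {..n}" by blast
  then have "finite ?R" by (rule finite_subset) simp
  moreover have "mat_rank x \<in> ?R" using x by blast
  ultimately show ?thesis unfolding min_rank_def by (rule Min_le)
qed

lemma min_rank_eqI:
  assumes "x \<in> X" "x \<noteq> 0\<^sub>m n n" "\<And>y. y \<in> X \<Longrightarrow> y \<noteq> 0\<^sub>m n n \<Longrightarrow> mat_rank y = r"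
  shows "min_rank n X = r"
proof -
  have "{mat_rank x | x. x \<in> X \<and> x \<noteq> 0\<^sub>m n n} = {r}" using assms by blast
  then show ?thesis unfolding min_rank_def by simp
qed

lemma one_mat_neq_zero_mat: "n > 0 \<Longrightarrow> (1\<^sub>m n :: 'a::zero_neq_one mat) \<noteq> 0\<^sub>m n n"
  by (metis index_one_mat(1) index_zero_mat(1) zero_neq_one)

definition partner :: "nat \<Rightarrow> nat" where
  "partner a = (if even a then Suc a else a - 1)"

definition partner_sign :: "nat \<Rightarrow> real" where
  "partner_sign a = (if even a then -1 else 1)"

definition cplx_mat :: "nat \<Rightarrow> real mat" where
  "cplx_mat n = mat n n (\<lambda>(i, j). if j = partner i then partner_sign i else 0)"

definition cplx_space :: "nat \<Rightarrow> real mat set" where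
  "cplx_space n = {a \<cdot>\<^sub>m 1\<^sub>m n + b \<cdot>\<^sub>m cplx_mat n | a b. True}"

lemma partner_less: "even n \<Longrightarrow> a < n \<Longrightarrow> partner a < n"
  unfolding partner_def by (auto elim!: evenE oddE)

lemma partner_partner [simp]: "partner (partner a) = a"
  unfolding partner_def by (auto elim!: oddE)

lemma partner_neq: "partner a \<noteq> a"
  unfolding partner_def by (auto elim!: oddE)

lemma even_partner_iff [simp]: "even (partner a) \<longleftrightarrow> odd a"
  unfolding partner_def by (auto elim!: oddE)

lemma partner_eq_iff: "partner a = b \<longleftrightarrow> a = partner b"
  by (metis partner_partner)

lemma partner_sign_partner: "partner_sign (partner a) = - partner_sign a"
  unfolding partner_sign_def by simp

lemma dim_cplx_mat [simp]: "dim_row (cplx_mat n) = n" "dim_col (cplx_mat n) = n"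
  unfolding cplx_mat_def by simp_all

lemma cplx_mat_carrier_mat [simp]: "cplx_mat n \<in> carrier_mat n n"
  unfolding carrier_mat_def by simp

lemma cplx_mat_square:
  assumes n: "even n"
  shows "cplx_mat n * cplx_mat n = - 1\<^sub>m n"
proof (rule eq_matI)
  fix i j assume "i < dim_row (- 1\<^sub>m n :: real mat)" "j < dim_col (- 1\<^sub>m n :: real mat)"
  then have i: "i < n" and j: "j < n" by auto
  have "(cplx_mat n * cplx_mat n) $$ (i, j)
      = (\<Sum>k<n. (if k = partner i then partner_sign i else 0) *
                (if j = partner k then partner_sign k else 0))"
    using i j by (simp add: cplx_mat_def scalar_prod_def lessThan_atLeast0)
  also have "\<dots> = (\<Sum>k<n. if k = partner i then
      partner_sign i * (if j = partner (partner i) then partner_sign (partner i) else 0) else 0)"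
    by (rule sum.cong) auto
  also have "\<dots> = (- 1\<^sub>m n :: real mat) $$ (i, j)"
    using i j partner_less[OF n i] by (auto simp: partner_sign_partner partner_sign_def)
  finally show "(cplx_mat n * cplx_mat n) $$ (i, j) = (- 1\<^sub>m n :: real mat) $$ (i, j)" .
qed simp_all

lemma cplx_space_subspace: "is_mat_subspace n (cplx_space n)"
  unfolding is_mat_subspace_def
proof (intro conjI ballI allI subsetI)
  fix x assume "x \<in> cplx_space n"
  then show "x \<in> carrier_mat n n" unfolding cplx_space_def by auto
next
  have "0\<^sub>m n n = 0 \<cdot>\<^sub>m 1\<^sub>m n + 0 \<cdot>\<^sub>m cplx_mat n" by (intro eq_matI) auto
  then show "0\<^sub>m n n \<in> cplx_space n" unfolding cplx_space_def by blast
next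
  fix x y assume "x \<in> cplx_space n" "y \<in> cplx_space n"
  then obtain a b c d where "x = a \<cdot>\<^sub>m 1\<^sub>m n + b \<cdot>\<^sub>m cplx_mat n" "y = c \<cdot>\<^sub>m 1\<^sub>m n + d \<cdot>\<^sub>m cplx_mat n"
    unfolding cplx_space_def by blast
  then have "x + y = (a + c) \<cdot>\<^sub>m 1\<^sub>m n + (b + d) \<cdot>\<^sub>m cplx_mat n"
    by (intro eq_matI) (auto simp: algebra_simps)
  then show "x + y \<in> cplx_space n" unfolding cplx_space_def by blast
next
  fix c x assume "x \<in> cplx_space n"
  then obtain a b where "x = a \<cdot>\<^sub>m 1\<^sub>m n + b \<cdot>\<^sub>m cplx_mat n" unfolding cplx_space_def by blast
  then have "c \<cdot>\<^sub>m x = (c * a) \<cdot>\<^sub>m 1\<^sub>m n + (c * b) \<cdot>\<^sub>m cplx_mat n"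
    by (intro eq_matI) (auto simp: algebra_simps)
  then show "c \<cdot>\<^sub>m x \<in> cplx_space n" unfolding cplx_space_def by blast
qed

lemma one_mem_cplx_space: "1\<^sub>m n \<in> cplx_space n"
proof -
  have "1\<^sub>m n = 1 \<cdot>\<^sub>m 1\<^sub>m n + 0 \<cdot>\<^sub>m cplx_mat n" by (intro eq_matI) auto
  then show ?thesis unfolding cplx_space_def by blast
qed

lemma cplx_mat_mem_cplx_space: "cplx_mat n \<in> cplx_space n"
proof -
  have "cplx_mat n = 0 \<cdot>\<^sub>m 1\<^sub>m n + 1 \<cdot>\<^sub>m cplx_mat n" by (intro eq_matI) auto
  then show ?thesis unfolding cplx_space_def by blast
qed

lemma mat_rank_cplx_space:
  assumes n: "even n" and x: "x \<in> cplx_space n" and nz: "x \<noteq> 0\<^sub>m n n"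
  shows "mat_rank x = n"
proof -
  obtain a b where x_eq: "x = a \<cdot>\<^sub>m 1\<^sub>m n + b \<cdot>\<^sub>m cplx_mat n" using x unfolding cplx_space_def by blast
  have "a \<noteq> 0 \<or> b \<noteq> 0"
  proof (rule ccontr)
    assume "\<not> (a \<noteq> 0 \<or> b \<noteq> 0)"
    then have "x = 0\<^sub>m n n" unfolding x_eq by (intro eq_matI) auto
    then show False using nz by simp
  qed
  then have norm_nz: "a\<^sup>2 + b\<^sup>2 \<noteq> 0" by (simp add: sum_power2_eq_zero_iff)
  define y where "y = a \<cdot>\<^sub>m 1\<^sub>m n + (-b) \<cdot>\<^sub>m cplx_mat n"
  have xc: "x \<in> carrier_mat n n" and yc: "y \<in> carrier_mat n n" unfolding x_eq y_def by auto
  have "det x * det y = (a\<^sup>2 + b\<^sup>2) ^ n"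
    using det_mult[OF xc yc] unfolding x_eq y_def
    by (simp add: mult_eq_smult_one_if_square_eq_minus_one[OF _ cplx_mat_square[OF n]])
  then have "det x \<noteq> 0" using norm_nz by auto
  then have "vec_space.rank n x = n" by (rule vec_space.low_rank_det_zero[OF xc])
  then show ?thesis unfolding mat_rank_def using xc by simp
qed

lemma min_rank_cplx_space:
  assumes "even n" "n > 0"
  shows "min_rank n (cplx_space n) = n"
  using one_mem_cplx_space one_mat_neq_zero_mat[OF assms(2)]
  by (rule min_rank_eqI) (rule mat_rank_cplx_space[OF assms(1)])

definition pair_orbit_rep :: "nat \<times> nat \<Rightarrow> nat \<times> nat" where
  "pair_orbit_rep p = (if even (fst p) then p else (partner (fst p), partner (snd p)))"

definition pair_orbit_sign :: "nat \<times> nat \<Rightarrow> real" where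
  "pair_orbit_sign p =
     (if even (fst p) then 1 else - partner_sign (partner (fst p)) * partner_sign (partner (snd p)))"

lemma id_kron_minus_cplx_kron_entry:
  "(if a = c then 1 else 0) * (if a' = c' then 1 else 0)
     - (if c = partner a then partner_sign a else 0) * (if c' = partner a' then partner_sign a' else 0)
   = (if pair_orbit_rep (a, a') = pair_orbit_rep (c, c')
      then pair_orbit_sign (a, a') * pair_orbit_sign (c, c') else (0::real))"
  unfolding pair_orbit_rep_def pair_orbit_sign_def
  by (auto simp: partner_sign_partner partner_eq_iff partner_neq partner_neq[symmetric] partner_sign_def)

lemma div_mod_less_of_less_square:
  fixes r n :: nat
  assumes "r < n * n"
  shows "r div n < n" "r mod n < n"
proof -
  have "n > 0" using assms by (cases n) auto
  then show "r div n < n" "r mod n < n" using assms by (auto simp: less_mult_imp_div_less)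
qed

definition cplx_zero_divisor :: "nat \<Rightarrow> real mat" where
  "cplx_zero_divisor n = kron (1\<^sub>m n) (1\<^sub>m n) + (-1) \<cdot>\<^sub>m kron (cplx_mat n) (cplx_mat n)"

lemma cplx_zero_divisor_carrier_mat: "cplx_zero_divisor n \<in> carrier_mat (n * n) (n * n)"
  unfolding cplx_zero_divisor_def kron_def by simp

lemma cplx_zero_divisor_mem_tensor_space: "cplx_zero_divisor n \<in> tensor_space n (cplx_space n)"
  unfolding cplx_zero_divisor_def tensor_space_def
  by (rule mat_span_add_smult_mem) (use one_mem_cplx_space cplx_mat_mem_cplx_space in blast)+

lemma cplx_zero_divisor_neq_zero_mat:
  assumes "n > 0"
  shows "cplx_zero_divisor n \<noteq> 0\<^sub>m (n * n) (n * n)"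
proof -
  have "cplx_zero_divisor n $$ (0, 0) = 1"
    using assms unfolding cplx_zero_divisor_def kron_def cplx_mat_def partner_def by simp
  then show ?thesis using assms by auto
qed

lemma cplx_zero_divisor_entry:
  assumes "r < n * n" "c < n * n"
  shows "cplx_zero_divisor n $$ (r, c) =
    (if pair_orbit_rep (r div n, r mod n) = pair_orbit_rep (c div n, c mod n)
     then pair_orbit_sign (r div n, r mod n) * pair_orbit_sign (c div n, c mod n) else 0)"
  using div_mod_less_of_less_square[OF assms(1)] div_mod_less_of_less_square[OF assms(2)] assms
    id_kron_minus_cplx_kron_entry
  unfolding cplx_zero_divisor_def kron_def cplx_mat_def by simp

lemma mat_rank_cplx_zero_divisor:
  assumes n: "n = 2 * m"
  shows "mat_rank (cplx_zero_divisor n) \<le> m * n"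
proof -
  let ?\<rho> = "\<lambda>r. pair_orbit_rep (r div n, r mod n)"
  have "?\<rho> ` {..<n * n} \<subseteq> (\<lambda>(k, b). (2 * k, b)) ` ({..<m} \<times> {..<n})"
  proof
    fix p assume "p \<in> ?\<rho> ` {..<n * n}"
    then obtain r where r: "r < n * n" "p = ?\<rho> r" by blast
    then have "even (fst p)" "fst p < n" "snd p < n"
      using div_mod_less_of_less_square[OF r(1)] r(2) n partner_less[of n]
      unfolding pair_orbit_rep_def by auto
    then show "p \<in> (\<lambda>(k, b). (2 * k, b)) ` ({..<m} \<times> {..<n})"
      using n by (cases p) (auto elim!: evenE)
  qed
  then have "card (?\<rho> ` {..<n * n}) \<le> card ({..<m} \<times> {..<n})"
    by (meson card_image_le card_mono finite_SigmaI finite_lessThan le_trans finite_imageI)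
  moreover have "vec_space.rank (n * n) (cplx_zero_divisor n) \<le> card (?\<rho> ` {..<n * n})"
    by (rule rank_le_card_of_block_entries[OF cplx_zero_divisor_carrier_mat cplx_zero_divisor_entry])
  ultimately show ?thesis unfolding mat_rank_def using cplx_zero_divisor_carrier_mat[of n] by simp
qed

lemma min_rank_tensor_cplx_space_le:
  assumes "m > 0"
  shows "min_rank (2 * m * (2 * m)) (tensor_space (2 * m) (cplx_space (2 * m))) \<le> 2 * m * m"
proof -
  let ?n = "2 * m"
  have "cplx_space ?n \<subseteq> carrier_mat ?n ?n"
    using cplx_space_subspace unfolding is_mat_subspace_def by blast
  then have "min_rank (?n * ?n) (tensor_space ?n (cplx_space ?n)) \<le> mat_rank (cplx_zero_divisor ?n)"
    using assms by (intro min_rank_le tensor_space_subset_carrier_mat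
        cplx_zero_divisor_mem_tensor_space cplx_zero_divisor_neq_zero_mat) auto
  also have "\<dots> \<le> 2 * m * m" using mat_rank_cplx_zero_divisor[of ?n m] by simp
  finally show ?thesis .
qed

lemma cplx_space_neq_zero: "n > 0 \<Longrightarrow> cplx_space n \<noteq> {0\<^sub>m n n}"
  using one_mem_cplx_space one_mat_neq_zero_mat by blast

lemma min_rank_gap_cplx_space:
  assumes "m > 0"
  shows "int (2 * m * m) \<le> int ((min_rank (2 * m) (cplx_space (2 * m)))\<^sup>2)
      - int (min_rank (2 * m * (2 * m)) (tensor_space (2 * m) (cplx_space (2 * m))))"
proof -
  have "(min_rank (2 * m) (cplx_space (2 * m)))\<^sup>2 = 4 * m * m"
    using min_rank_cplx_space[of "2 * m"] assms by (simp add: power2_eq_square)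
  moreover have "int (min_rank (2 * m * (2 * m)) (tensor_space (2 * m) (cplx_space (2 * m))))
      \<le> int (2 * m * m)"
    using min_rank_tensor_cplx_space_le[OF assms] by (simp only: of_nat_le_iff)
  ultimately show ?thesis by simp
qed

theorem mainTheorem2:
  shows "(\<exists>n X. is_mat_subspace n X \<and> X \<noteq> {0\<^sub>m n n} \<and>
            min_rank (n * n) (tensor_space n X) < (min_rank n X)\<^sup>2)
       \<and> (\<forall>N::nat. \<exists>n X. is_mat_subspace n X \<and> X \<noteq> {0\<^sub>m n n} \<and>
            int ((min_rank n X)\<^sup>2) - int (min_rank (n * n) (tensor_space n X)) \<ge> int N)"
proof -
  have gap: "\<exists>n X. is_mat_subspace n X \<and> X \<noteq> {0\<^sub>m n n} \<and>
      int ((min_rank n X)\<^sup>2) - int (min_rank (n * n) (tensor_space n X)) \<ge> int N" for N :: nat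
  proof (intro exI conjI)
    let ?n = "2 * (N + 1)"
    show "is_mat_subspace ?n (cplx_space ?n)" by (rule cplx_space_subspace)
    show "cplx_space ?n \<noteq> {0\<^sub>m ?n ?n}" by (rule cplx_space_neq_zero) simp
    have "int N \<le> int (2 * (N + 1) * (N + 1))" by simp
    also have "\<dots> \<le> int ((min_rank ?n (cplx_space ?n))\<^sup>2)
        - int (min_rank (?n * ?n) (tensor_space ?n (cplx_space ?n)))"
      by (rule min_rank_gap_cplx_space) simp
    finally show "int ((min_rank ?n (cplx_space ?n))\<^sup>2)
        - int (min_rank (?n * ?n) (tensor_space ?n (cplx_space ?n))) \<ge> int N" .
  qed
  moreover obtain n X where "is_mat_subspace n X" "X \<noteq> {0\<^sub>m n n}"
    "int ((min_rank n X)\<^sup>2) - int (min_rank (n * n) (tensor_space n X)) \<ge> int 1"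
    using gap by blast
  moreover from this(3) have "min_rank (n * n) (tensor_space n X) < (min_rank n X)\<^sup>2"
    by linarith
  ultimately show ?thesis by blast
qed

end
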